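(* Let $N\ge1$, $\theta\in\mathbb{R}$, frequencies $w_1,\dots,w_N>0$ and amplitudes $G_1,\dots,G_N\in\mathbb{R}$, and let $g(t)=\sum_{k=1}^N G_k\sin(w_kt+\theta)$. For $i=1,2,3,\dots$ let $$x_i(t)=\sum_{k=1}^N G_kF_i(w_k)\sin(w_kt+\phi_i+\theta)+n_i(t),$$ where the tuples $(F_i(w_1),\dots,F_i(w_N),\phi_i,n_i(\cdot))$ are i.i.d. across $i$; for each $i$, the vector $(F_i(w_1),\dots,F_i(w_N))$, the phase $\phi_i$ and the noise process $n_i(\cdot)$ are mutually independent; each $F_i(w_k)$ is integrable; $\phi_i$ is uniform on $[-\pi,\pi]$ (the phase lag of channel $i$ being the same at all frequencies $w_k$); and $E[n_i(t)]=0$ for each $t$. For $M\ge1$ let $X^+_M=\{i\le M:|\phi_i|\le\pi/2\}$ with cardinality $\overline{X^+_M}$ and $\hat g_M(t)=\frac{1}{\overline{X^+_M}}\sum_{i\in X^+_M}x_i(t)$. If $E[F_i(w_k)]$ is the same constant for all $k=1,\dots,N$, then there is a constant $c$ such that for every $t$, $\hat g_M(t)\to c\,g(t)$ almost surely as $M\to\infty$.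
   Context: $x_i$ models the noisy output of the $i$-th linear time-invariant channel (magnitude response $F_i(w_k)$ at $w_k$, phase response $\phi_i$) driven by the common periodic input $g$. *)

theory Defs
  imports "HOL-Probability.Probability"
begin

text \<open>Mutual independence of three random elements (possibly of different types),
  written out as independence of the generated event families, exactly as
  indep_vars unfolds.\<close>
definition indep3 ::
  "'a measure \<Rightarrow> 'b measure \<Rightarrow> ('a \<Rightarrow> 'b) \<Rightarrow> 'c measure \<Rightarrow> ('a \<Rightarrow> 'c)
     \<Rightarrow> 'd measure \<Rightarrow> ('a \<Rightarrow> 'd) \<Rightarrow> bool" where
  "indep3 M N1 X1 N2 X2 N3 X3 \<longleftrightarrow>
     X1 \<in> measurable M N1 \<and> X2 \<in> measurable M N2 \<and> X3 \<in> measurable M N3 \<and>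
     prob_space.indep_sets M
       (\<lambda>j::nat. if j = 0 then {X1 -` A \<inter> space M | A. A \<in> sets N1}
                 else if j = 1 then {X2 -` A \<inter> space M | A. A \<in> sets N2}
                 else {X3 -` A \<inter> space M | A. A \<in> sets N3}) {0, 1, 2}"

definition tuple_space :: "nat \<Rightarrow> ((nat \<Rightarrow> real) \<times> real \<times> (real \<Rightarrow> real)) measure" where
  "tuple_space N = (PiM {1..N} (\<lambda>_. borel)) \<Otimes>\<^sub>M (borel \<Otimes>\<^sub>M PiM UNIV (\<lambda>_. borel))"

end

theory Submission
  imports Defs
begin

(* Both the sum of the x_i(t) over X+_M and the cardinality of X+_M are sums over i <= M of
   functionals of the i.i.d. tuples (F_i(w_1..w_N), phi_i, n_i), namely of
   1{|phi_i| <= pi/2} x_i(t) and of 1{|phi_i| <= pi/2}.  By the strong law of large numbers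
   (in Etemadi's form for pairwise independent identically distributed variables:
   truncate, use Chebyshev and Borel-Cantelli along the geometric subsequences floor(alpha^j),
   and interpolate by monotonicity) both averages converge almost surely to their means.
   The selection has probability 1/2, and independence of gains, phase and noise gives
     E[1{|phi| <= pi/2} x(t)] = sum_k G_k E[F(w_k)] E[1{|phi| <= pi/2} sin(w_k t + theta + phi)]
                              = C/pi * g(t),
   because averaging sin(s + phi) over |phi| <= pi/2 against the uniform law on [-pi, pi]
   gives sin(s)/pi, while the noise term has mean 0.  Hence ghat_M(t) -> (2C/pi) g(t). *)

section \<open>Real sequences\<close>

lemma tendsto_Cesaro_mean:
  fixes a :: "nat \<Rightarrow> real"
  assumes lim: "a \<longlonglongrightarrow> L"
  shows "(\<lambda>n. (\<Sum>i<n. a i) / real n) \<longlonglongrightarrow> L"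
proof (rule LIMSEQ_I)
  fix r :: real assume r: "0 < r"
  from LIMSEQ_D[OF lim, of "r/2"] r obtain N where N: "\<And>n. n \<ge> N \<Longrightarrow> norm (a n - L) < r/2"
    by auto
  define B where "B = (\<Sum>i<N. \<bar>a i - L\<bar>)"
  have B0: "B \<ge> 0" unfolding B_def by (auto intro: sum_nonneg)
  define n0 where "n0 = max (N+1) (nat \<lceil>2*B/r\<rceil> + 1)"
  show "\<exists>no. \<forall>n\<ge>no. norm ((\<Sum>i<n. a i) / real n - L) < r"
  proof (intro exI allI impI)
    fix n assume n: "n \<ge> n0"
    have nN: "n \<ge> N" "n > 0" using n unfolding n0_def by auto
    have nB: "real n > 2*B/r"
    proof -
      have "real n \<ge> real (nat \<lceil>2*B/r\<rceil> + 1)" using n unfolding n0_def by auto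
      moreover have "real (nat \<lceil>2*B/r\<rceil>) \<ge> 2*B/r" by linarith
      ultimately show ?thesis by simp
    qed
    have eq: "(\<Sum>i<n. a i) / real n - L = (\<Sum>i<n. a i - L) / real n"
      using nN by (simp add: sum_subtractf field_simps)
    have split: "{..<n} = {..<N} \<union> {N..<n}" using nN by auto
    have "\<bar>\<Sum>i<n. a i - L\<bar> \<le> (\<Sum>i<n. \<bar>a i - L\<bar>)" by (rule sum_abs)
    also have "\<dots> = B + (\<Sum>i\<in>{N..<n}. \<bar>a i - L\<bar>)"
      unfolding B_def split by (subst sum.union_disjoint) auto
    also have "(\<Sum>i\<in>{N..<n}. \<bar>a i - L\<bar>) \<le> (\<Sum>i\<in>{N..<n}. r/2)"
      using N by (intro sum_mono) (auto intro: less_imp_le)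
    also have "\<dots> = real (n - N) * (r/2)" by simp
    also have "\<dots> \<le> real n * (r/2)" using r by (intro mult_right_mono) auto
    finally have S: "\<bar>\<Sum>i<n. a i - L\<bar> \<le> B + real n * (r/2)" by simp
    have "B < real n * (r/2)" using nB r by (simp add: field_simps)
    with S have "\<bar>\<Sum>i<n. a i - L\<bar> < real n * r" by simp
    then show "norm ((\<Sum>i<n. a i) / real n - L) < r"
      unfolding eq using nN by (simp add: field_simps abs_divide)
  qed
qed

lemma tendsto_ratio_of_averages:
  fixes A B :: "nat \<Rightarrow> real"
  assumes "(\<lambda>m. A m / real m) \<longlonglongrightarrow> a" "(\<lambda>m. B m / real m) \<longlonglongrightarrow> b" "b \<noteq> 0"
  shows "(\<lambda>m. A m / B m) \<longlonglongrightarrow> a / b"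
proof (rule Lim_transform_eventually)
  show "(\<lambda>m. (A m / real m) / (B m / real m)) \<longlonglongrightarrow> a / b"
    using assms by (rule tendsto_divide)
  show "\<forall>\<^sub>F m in sequentially. A m / real m / (B m / real m) = A m / B m"
    using eventually_gt_at_top[of 0] by eventually_elim simp
qed

lemma mono_unbounded_bracket:
  fixes k :: "nat \<Rightarrow> nat"
  assumes kmono: "mono k" and kunb: "\<And>n. \<exists>j. n < k j" and n: "k J \<le> n"
  obtains j where "J \<le> j" "k j \<le> n" "n < k (Suc j)"
proof -
  define L where "L = (LEAST j. n < k j)"
  have L: "n < k L" unfolding L_def using kunb[of n] by (metis LeastI)
  have "\<not> n < k i" if "i < L" for i
    using that unfolding L_def by (rule not_less_Least)
  then have below: "k i \<le> n" if "i < L" for i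
    using that by (simp add: not_less)
  have "J < L"
  proof (rule ccontr)
    assume "\<not> J < L"
    then have "k L \<le> k J" using kmono by (simp add: monoD)
    with L n show False by simp
  qed
  then obtain j where "L = Suc j" "J \<le> j"
    by (cases L) auto
  with below[of j] L show ?thesis
    by (intro that) simp_all
qed

lemma mono_average_bracket_bounds:
  fixes a :: "nat \<Rightarrow> real" and p q n :: nat
  assumes amono: "mono a" and apos: "\<And>n. a n \<ge> 0"
    and pn: "p \<le> n" and nq: "n < q" and p: "0 < p"
    and lower: "(\<mu> - \<delta>) * real p \<le> a p" and upper: "a q \<le> (\<mu> + \<delta>) * real q"
    and ratio: "real q \<le> \<beta> * real p" and \<beta>: "\<beta> > 0"
  shows "(\<mu> - \<delta>) / \<beta> \<le> a n / real n" and "a n / real n \<le> (\<mu> + \<delta>) * \<beta>"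
proof -
  have n: "real n > 0" using pn p by simp
  have an: "a p \<le> a n" "a n \<le> a q" using amono pn nq by (simp_all add: monoD)
  have "0 \<le> (\<mu> + \<delta>) * real q" using apos[of q] upper by (rule order_trans)
  then have md: "\<mu> + \<delta> \<ge> 0" using nq by (simp add: zero_le_mult_iff)
  have "a n \<le> (\<mu> + \<delta>) * (\<beta> * real p)"
    using an(2) upper mult_left_mono[OF ratio md] by linarith
  also have "\<dots> \<le> (\<mu> + \<delta>) * (\<beta> * real n)"
    using md \<beta> pn by (intro mult_left_mono) auto
  finally show "a n / real n \<le> (\<mu> + \<delta>) * \<beta>"
    using n by (simp add: field_simps)
  show "(\<mu> - \<delta>) / \<beta> \<le> a n / real n"
  proof (cases "\<mu> - \<delta> \<le> 0")
    case True
    then have "(\<mu> - \<delta>) / \<beta> \<le> 0" using \<beta> by (simp add: divide_nonpos_pos)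
    also have "0 \<le> a n / real n" using apos[of n] by simp
    finally show ?thesis .
  next
    case False
    have "(\<mu> - \<delta>) * real n \<le> (\<mu> - \<delta>) * real q"
      using False nq by (intro mult_left_mono) auto
    also have "\<dots> \<le> (\<mu> - \<delta>) * (\<beta> * real p)"
      using False ratio by (intro mult_left_mono) auto
    also have "\<dots> = \<beta> * ((\<mu> - \<delta>) * real p)" by simp
    also have "\<dots> \<le> \<beta> * a n"
      using lower an(1) \<beta> by (intro mult_left_mono) auto
    finally show ?thesis using n \<beta> by (simp add: field_simps)
  qed
qed

lemma monotone_average_eventual_bounds:
  fixes a :: "nat \<Rightarrow> real" and k :: "nat \<Rightarrow> nat"
  assumes amono: "mono a" and apos: "\<And>n. a n \<ge> 0"
    and kmono: "mono k" and kpos: "\<And>j. k j > 0" and kunb: "\<And>n. \<exists>j. n < k j"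
    and ratio: "(\<lambda>j. real (k (Suc j)) / real (k j)) \<longlonglongrightarrow> \<alpha>"
    and lim: "(\<lambda>j. a (k j) / real (k j)) \<longlonglongrightarrow> \<mu>"
    and \<delta>: "\<delta> > 0" and \<alpha>: "\<alpha> > 0"
  shows "eventually (\<lambda>n. (\<mu>-\<delta>)/(\<alpha>+\<delta>) \<le> a n / real n \<and> a n / real n \<le> (\<mu>+\<delta>)*(\<alpha>+\<delta>)) sequentially"
proof -
  from LIMSEQ_D[OF lim \<delta>] obtain J1 where J1: "\<And>j. j \<ge> J1 \<Longrightarrow> \<bar>a (k j) / real (k j) - \<mu>\<bar> < \<delta>"
    by auto
  from LIMSEQ_D[OF ratio \<delta>] obtain J2 where J2: "\<And>j. j \<ge> J2 \<Longrightarrow> \<bar>real (k (Suc j)) / real (k j) - \<alpha>\<bar> < \<delta>"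
    by auto
  define J where "J = max J1 J2"
  show ?thesis
  proof (rule eventually_sequentiallyI[of "k J"])
    fix n assume n: "k J \<le> n"
    obtain j where jJ: "J \<le> j" and kj: "k j \<le> n" and kSj: "n < k (Suc j)"
      using mono_unbounded_bracket[OF kmono kunb n] .
    have kjp: "real (k j) > 0" "real (k (Suc j)) > 0" using kpos by auto
    have "(\<mu> - \<delta>) * real (k j) \<le> a (k j)" "a (k (Suc j)) \<le> (\<mu> + \<delta>) * real (k (Suc j))"
      using J1[of j] J1[of "Suc j"] jJ kjp unfolding J_def by (simp_all add: abs_less_iff field_simps)
    moreover have "real (k (Suc j)) \<le> (\<alpha> + \<delta>) * real (k j)"
      using J2[of j] jJ kjp unfolding J_def by (simp add: abs_less_iff field_simps)
    ultimately show "(\<mu>-\<delta>)/(\<alpha>+\<delta>) \<le> a n / real n \<and> a n / real n \<le> (\<mu>+\<delta>)*(\<alpha>+\<delta>)"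
      using mono_average_bracket_bounds[OF amono apos kj kSj kpos] \<alpha> \<delta> by simp
  qed
qed

lemma LIMSEQ_eventual_bounds:
  fixes f :: "nat \<Rightarrow> real"
  assumes ev: "\<And>l. eventually (\<lambda>n. lo l \<le> f n \<and> f n \<le> up l) sequentially"
    and lo: "lo \<longlonglongrightarrow> \<mu>" and up: "up \<longlonglongrightarrow> \<mu>"
  shows "f \<longlonglongrightarrow> \<mu>"
proof (rule LIMSEQ_I)
  fix r :: real assume r: "r > 0"
  from LIMSEQ_D[OF lo r] obtain l1 where l1: "\<And>l. l \<ge> l1 \<Longrightarrow> norm (lo l - \<mu>) < r" by auto
  from LIMSEQ_D[OF up r] obtain l2 where l2: "\<And>l. l \<ge> l2 \<Longrightarrow> norm (up l - \<mu>) < r" by auto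
  define l where "l = max l1 l2"
  have a: "\<bar>lo l - \<mu>\<bar> < r" "\<bar>up l - \<mu>\<bar> < r" using l1 l2 unfolding l_def by auto
  from ev[of l] obtain N where N: "\<And>n. n \<ge> N \<Longrightarrow> lo l \<le> f n \<and> f n \<le> up l"
    unfolding eventually_sequentially by auto
  show "\<exists>no. \<forall>n\<ge>no. norm (f n - \<mu>) < r"
  proof (intro exI allI impI)
    fix n assume "n \<ge> N"
    from N[OF this] a show "norm (f n - \<mu>) < r" by auto
  qed
qed

section \<open>Etemadi's strong law of large numbers\<close>

definition floor_pow :: "real \<Rightarrow> nat \<Rightarrow> nat" where
  "floor_pow \<alpha> j = nat \<lfloor>\<alpha> ^ j\<rfloor>"

lemma floor_pow_bounds:
  assumes "\<alpha> > 1"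
  shows "real (floor_pow \<alpha> j) \<le> \<alpha> ^ j" "\<alpha> ^ j - 1 < real (floor_pow \<alpha> j)" "floor_pow \<alpha> j > 0"
    "\<alpha> ^ j / 2 \<le> real (floor_pow \<alpha> j)"
proof -
  have p: "\<alpha> ^ j \<ge> 1" using assms by (simp add: one_le_power)
  then have f: "\<lfloor>\<alpha> ^ j\<rfloor> \<ge> 1" by simp
  show "real (floor_pow \<alpha> j) \<le> \<alpha> ^ j" unfolding floor_pow_def using f by linarith
  show "\<alpha> ^ j - 1 < real (floor_pow \<alpha> j)" unfolding floor_pow_def using f by linarith
  show "floor_pow \<alpha> j > 0" unfolding floor_pow_def using f by linarith
  show "\<alpha> ^ j / 2 \<le> real (floor_pow \<alpha> j)" unfolding floor_pow_def using f p by linarith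
qed

lemma floor_pow_mono:
  assumes "\<alpha> > 1" shows "mono (floor_pow \<alpha>)"
proof (rule monoI)
  fix i j :: nat assume "i \<le> j"
  then have "\<alpha> ^ i \<le> \<alpha> ^ j" using assms by (intro power_increasing) auto
  then show "floor_pow \<alpha> i \<le> floor_pow \<alpha> j" unfolding floor_pow_def by (intro nat_mono floor_mono)
qed

lemma floor_pow_unbounded:
  assumes "\<alpha> > 1" shows "\<exists>j. n < floor_pow \<alpha> j"
proof -
  obtain j where j: "real n + 1 < \<alpha> ^ j" using real_arch_pow[OF assms] by blast
  then have "real n < real (floor_pow \<alpha> j)" using floor_pow_bounds(2)[OF assms, of j] by linarith
  then show ?thesis by auto
qed

lemma floor_pow_ratio:
  assumes a: "\<alpha> > 1"
  shows "(\<lambda>j. real (floor_pow \<alpha> (Suc j)) / real (floor_pow \<alpha> j)) \<longlonglongrightarrow> \<alpha>"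
proof (rule tendsto_sandwich)
  have q: "(\<lambda>j. (1/\<alpha>) ^ j) \<longlonglongrightarrow> 0"
    using a by (intro LIMSEQ_power_zero) auto
  have "(\<lambda>j. \<alpha> - (1/\<alpha>) ^ j) \<longlonglongrightarrow> \<alpha> - 0" by (intro tendsto_intros q)
  then show "(\<lambda>j. \<alpha> - (1/\<alpha>) ^ j) \<longlonglongrightarrow> \<alpha>" by simp
  have "(\<lambda>j. \<alpha> / (1 - (1/\<alpha>) ^ j)) \<longlonglongrightarrow> \<alpha> / (1 - 0)" by (intro tendsto_intros q) auto
  then show "(\<lambda>j. \<alpha> / (1 - (1/\<alpha>) ^ j)) \<longlonglongrightarrow> \<alpha>" by simp
  show "eventually (\<lambda>j. \<alpha> - (1/\<alpha>) ^ j \<le> real (floor_pow \<alpha> (Suc j)) / real (floor_pow \<alpha> j)) sequentially"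
  proof (intro always_eventually allI)
    fix j
    have b1: "real (floor_pow \<alpha> j) \<le> \<alpha> ^ j" "\<alpha> ^ Suc j - 1 < real (floor_pow \<alpha> (Suc j))"
      "real (floor_pow \<alpha> j) > 0" using floor_pow_bounds[OF a, of j] floor_pow_bounds[OF a, of "Suc j"] by auto
    have pj: "\<alpha> ^ j > 0" using a by simp
    have "\<alpha> - (1/\<alpha>) ^ j = (\<alpha> ^ Suc j - 1) / \<alpha> ^ j"
      using pj by (simp add: power_one_over diff_divide_distrib)
    also have "\<dots> \<le> (\<alpha> ^ Suc j - 1) / real (floor_pow \<alpha> j)"
    proof (rule divide_left_mono)
      have "1 \<le> \<alpha> ^ Suc j" using a by (intro one_le_power) auto
      then show "0 \<le> \<alpha> ^ Suc j - 1" by simp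
    qed (use b1 in auto)
    also have "\<dots> \<le> real (floor_pow \<alpha> (Suc j)) / real (floor_pow \<alpha> j)"
      using b1 by (intro divide_right_mono) auto
    finally show "\<alpha> - (1/\<alpha>) ^ j \<le> real (floor_pow \<alpha> (Suc j)) / real (floor_pow \<alpha> j)" .
  qed
  show "eventually (\<lambda>j. real (floor_pow \<alpha> (Suc j)) / real (floor_pow \<alpha> j) \<le> \<alpha> / (1 - (1/\<alpha>) ^ j)) sequentially"
  proof (rule eventually_sequentiallyI[of 1])
    fix j :: nat assume j: "1 \<le> j"
    have b1: "real (floor_pow \<alpha> (Suc j)) \<le> \<alpha> ^ Suc j" "\<alpha> ^ j - 1 < real (floor_pow \<alpha> j)"
      using floor_pow_bounds[OF a, of j] floor_pow_bounds[OF a, of "Suc j"] by auto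
    have pj: "\<alpha> ^ j > 1" using a j by (simp add: one_less_power)
    have "real (floor_pow \<alpha> (Suc j)) / real (floor_pow \<alpha> j) \<le> \<alpha> ^ Suc j / real (floor_pow \<alpha> j)"
      using b1 floor_pow_bounds(3)[OF a, of j] by (intro divide_right_mono) auto
    also have "\<dots> \<le> \<alpha> ^ Suc j / (\<alpha> ^ j - 1)"
      using b1 pj a by (intro divide_left_mono) auto
    also have "\<dots> = \<alpha> / (1 - (1/\<alpha>) ^ j)"
    proof -
      have "\<alpha> ^ j \<noteq> 0" "\<alpha> \<noteq> 0" using pj a by auto
      then show ?thesis by (simp add: power_one_over field_simps)
    qed
    finally show "real (floor_pow \<alpha> (Suc j)) / real (floor_pow \<alpha> j) \<le> \<alpha> / (1 - (1/\<alpha>) ^ j)" .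
  qed
qed

lemma filterlim_floor_pow:
  assumes a: "\<alpha> > 1"
  shows "filterlim (floor_pow \<alpha>) at_top sequentially"
  unfolding filterlim_at_top
proof
  fix Z :: nat
  obtain j0 where j0: "Z < floor_pow \<alpha> j0" using floor_pow_unbounded[OF a] by blast
  show "eventually (\<lambda>j. Z \<le> floor_pow \<alpha> j) sequentially"
  proof (rule eventually_sequentiallyI[of j0])
    fix j assume "j0 \<le> j"
    then have "floor_pow \<alpha> j0 \<le> floor_pow \<alpha> j" using floor_pow_mono[OF a] by (simp add: monoD)
    then show "Z \<le> floor_pow \<alpha> j" using j0 by simp
  qed
qed

lemma filterlim_real_floor_pow:
  assumes a: "\<alpha> > 1"
  shows "filterlim (\<lambda>j. real (floor_pow \<alpha> j)) at_top sequentially"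
  by (rule filterlim_compose[OF filterlim_real_sequentially filterlim_floor_pow[OF a]])

lemma sum_power_tail_le:
  fixes q :: real
  assumes q: "0 \<le> q" "q < 1"
  shows "(\<Sum>j<K. if j0 \<le> j then q ^ j else 0) \<le> q ^ j0 / (1 - q)"
proof -
  define h where "h j = (if j0 \<le> j then q ^ j else 0)" for j
  have h_nonneg: "h j \<ge> 0" for j
    unfolding h_def using q by auto
  have "summable h"
    by (rule summable_comparison_test'[OF summable_geometric[of q], of 0]) (use q in \<open>auto simp: h_def\<close>)
  then have "(\<Sum>j<K. h j) \<le> suminf h"
    using h_nonneg by (intro sum_le_suminf) auto
  also have "suminf h = (\<Sum>n. h (n + j0)) + (\<Sum>j<j0. h j)"
    using \<open>summable h\<close> by (rule suminf_split_initial_segment)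
  also have "\<dots> = (\<Sum>n. q ^ j0 * q ^ n)"
    unfolding h_def by (simp add: power_add mult_ac)
  also have "\<dots> = q ^ j0 / (1 - q)"
    using q by (simp add: suminf_mult suminf_geometric)
  finally show ?thesis
    unfolding h_def .
qed

lemma sum_floor_pow_tail_le:
  fixes \<alpha> x :: real
  assumes a: "\<alpha> > 1" and x: "x \<ge> 0"
  shows "(\<Sum>j<K. if x \<le> real (floor_pow \<alpha> j) then x^2 / real (floor_pow \<alpha> j) else 0) \<le> (2*\<alpha>/(\<alpha>-1)) * x"
proof -
  define y where "y = max x 1"
  define q where "q = 1/\<alpha>"
  have q: "0 < q" "q < 1" using a unfolding q_def by auto
  have "\<exists>j. y \<le> \<alpha> ^ j"
    using real_arch_pow[OF a, of y] by (auto intro: less_imp_le)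
  define j0 where "j0 = (LEAST j. y \<le> \<alpha> ^ j)"
  have yj0: "y \<le> \<alpha> ^ j0" unfolding j0_def using \<open>\<exists>j. y \<le> \<alpha> ^ j\<close> by (rule LeastI_ex)
  have term_le: "(if x \<le> real (floor_pow \<alpha> j) then x^2 / real (floor_pow \<alpha> j) else 0)
      \<le> 2 * x^2 * (if j0 \<le> j then q ^ j else 0)" for j
  proof (cases "x \<le> real (floor_pow \<alpha> j)")
    case True
    have kb: "real (floor_pow \<alpha> j) \<le> \<alpha> ^ j" "\<alpha> ^ j / 2 \<le> real (floor_pow \<alpha> j)" "floor_pow \<alpha> j > 0"
      using floor_pow_bounds[OF a] by auto
    have "1 \<le> \<alpha> ^ j" using a by (intro one_le_power) auto
    then have "y \<le> \<alpha> ^ j" using True kb unfolding y_def by auto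
    then have "j0 \<le> j" unfolding j0_def by (rule Least_le)
    have "x^2 / real (floor_pow \<alpha> j) \<le> x^2 / (\<alpha> ^ j / 2)"
      using kb a by (intro divide_left_mono) auto
    also have "\<dots> = 2 * x^2 * q ^ j" unfolding q_def by (simp add: power_one_over)
    finally show ?thesis using True \<open>j0 \<le> j\<close> by simp
  qed (use q in auto)
  have tail: "q ^ j0 / (1 - q) \<le> (1 / y) * (\<alpha> / (\<alpha> - 1))"
  proof -
    have "q ^ j0 \<le> 1 / y"
      using yj0 unfolding y_def q_def by (simp add: power_one_over divide_left_mono)
    then have "q ^ j0 / (1 - q) \<le> (1 / y) / (1 - q)"
      using q by (intro divide_right_mono) auto
    also have "\<dots> = (1 / y) * (\<alpha> / (\<alpha> - 1))"
      using a unfolding q_def by (simp add: field_simps)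
    finally show ?thesis .
  qed
  have "x^2 / y \<le> x"
    using x unfolding y_def by (simp add: field_simps power2_eq_square mult_left_mono)
  have "(\<Sum>j<K. if x \<le> real (floor_pow \<alpha> j) then x^2 / real (floor_pow \<alpha> j) else 0)
      \<le> 2 * x^2 * (\<Sum>j<K. if j0 \<le> j then q ^ j else 0)"
    unfolding sum_distrib_left by (intro sum_mono term_le)
  also have "\<dots> \<le> 2 * x^2 * (q ^ j0 / (1 - q))"
    using q by (intro mult_left_mono sum_power_tail_le) auto
  also have "\<dots> \<le> 2 * x^2 * ((1 / y) * (\<alpha> / (\<alpha> - 1)))"
    using tail by (rule mult_left_mono) simp
  also have "\<dots> = 2 * (x^2 / y) * (\<alpha> / (\<alpha> - 1))"
    by simp
  also have "\<dots> \<le> 2 * x * (\<alpha> / (\<alpha> - 1))"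
    using \<open>x^2 / y \<le> x\<close> a by (intro mult_right_mono mult_left_mono) auto
  finally show ?thesis
    by (simp add: mult_ac)
qed

lemma sum_Suc_less_le:
  fixes x :: real assumes x: "x \<ge> 0"
  shows "(\<Sum>i<n. if real (Suc i) < x then 1 else 0) \<le> x"
proof -
  have "(\<Sum>i<n. if real (Suc i) < x then 1 else (0::real)) = (\<Sum>i\<in>{i\<in>{..<n}. real (Suc i) < x}. 1)"
    by (subst sum.inter_filter) auto
  also have "\<dots> = real (card {i\<in>{..<n}. real (Suc i) < x})" by simp
  also have "card {i\<in>{..<n}. real (Suc i) < x} \<le> card {..<nat \<lfloor>x\<rfloor>}"
  proof (rule card_mono)
    show "{i \<in> {..<n}. real (Suc i) < x} \<subseteq> {..<nat \<lfloor>x\<rfloor>}"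
    proof
      fix i assume "i \<in> {i \<in> {..<n}. real (Suc i) < x}"
      then have "real i + 1 < x" by simp
      then have "int i + 1 \<le> \<lfloor>x\<rfloor>" by linarith
      then show "i \<in> {..<nat \<lfloor>x\<rfloor>}" by simp
    qed
  qed auto
  then have "real (card {i\<in>{..<n}. real (Suc i) < x}) \<le> real (nat \<lfloor>x\<rfloor>)" by simp
  also have "\<dots> \<le> x" using x by linarith
  finally show ?thesis .
qed

text \<open>Etemadi's truncation \<open>Y\<^sub>i = X\<^sub>i 1{X\<^sub>i \<le> i}\<close>, shifted by one because the
  variables are indexed from 0.\<close>

definition trunc_at :: "nat \<Rightarrow> real \<Rightarrow> real" where
  "trunc_at i x = (if x \<le> real (Suc i) then x else 0)"

lemma trunc_at_sq_sum_le:
  "(\<Sum>i<k. (trunc_at i x)^2) \<le> (if x \<le> real k then real k * x^2 else 0)"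
proof -
  have "(\<Sum>i<k. (trunc_at i x)^2) \<le> (\<Sum>i<k. if x \<le> real k then x^2 else 0)"
  proof (rule sum_mono)
    fix i assume "i \<in> {..<k}"
    then have "real (Suc i) \<le> real k" by simp
    then show "(trunc_at i x)^2 \<le> (if x \<le> real k then x^2 else 0)"
      unfolding trunc_at_def by auto
  qed
  also have "\<dots> = (if x \<le> real k then real k * x^2 else 0)" by simp
  finally show ?thesis .
qed

lemma sum_trunc_at_sq_floor_pow_le:
  fixes \<alpha> x :: real
  assumes a: "\<alpha> > 1" and x: "x \<ge> 0"
  shows "(\<Sum>j<K. (\<Sum>i<floor_pow \<alpha> j. (trunc_at i x)^2) / (real (floor_pow \<alpha> j))^2) \<le> (2*\<alpha>/(\<alpha>-1)) * x"
proof -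
  have "(\<Sum>j<K. (\<Sum>i<floor_pow \<alpha> j. (trunc_at i x)^2) / (real (floor_pow \<alpha> j))^2)
      \<le> (\<Sum>j<K. if x \<le> real (floor_pow \<alpha> j) then x^2 / real (floor_pow \<alpha> j) else 0)"
  proof (rule sum_mono)
    fix j
    have kp: "real (floor_pow \<alpha> j) > 0" using floor_pow_bounds(3)[OF a] by simp
    have "(\<Sum>i<floor_pow \<alpha> j. (trunc_at i x)^2) / (real (floor_pow \<alpha> j))^2
       \<le> (if x \<le> real (floor_pow \<alpha> j) then real (floor_pow \<alpha> j) * x^2 else 0) / (real (floor_pow \<alpha> j))^2"
      by (intro divide_right_mono trunc_at_sq_sum_le) auto
    also have "\<dots> = (if x \<le> real (floor_pow \<alpha> j) then x^2 / real (floor_pow \<alpha> j) else 0)"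
      using kp by (simp add: power2_eq_square)
    finally show "(\<Sum>i<floor_pow \<alpha> j. (trunc_at i x)^2) / (real (floor_pow \<alpha> j))^2
       \<le> (if x \<le> real (floor_pow \<alpha> j) then x^2 / real (floor_pow \<alpha> j) else 0)" .
  qed
  also have "\<dots> \<le> (2*\<alpha>/(\<alpha>-1)) * x" by (rule sum_floor_pow_tail_le[OF a x])
  finally show ?thesis .
qed

lemma trunc_at_measurable[measurable]: "trunc_at i \<in> borel_measurable borel"
  unfolding trunc_at_def by measurable

lemma trunc_at_bounds: "x \<ge> 0 \<Longrightarrow> trunc_at i x \<ge> 0" "x \<ge> 0 \<Longrightarrow> trunc_at i x \<le> real (Suc i)"
  unfolding trunc_at_def by auto

lemma distr_compose_eq:
  assumes [measurable]: "X \<in> measurable M N" "X' \<in> measurable M N" "f \<in> measurable N K"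
    and eq: "distr M N X = distr M N X'"
  shows "distr M K (\<lambda>\<omega>. f (X \<omega>)) = distr M K (\<lambda>\<omega>. f (X' \<omega>))"
proof -
  have "distr M K (\<lambda>\<omega>. f (X \<omega>)) = distr (distr M N X) K f"
    by (subst distr_distr) (auto simp: comp_def)
  also have "\<dots> = distr (distr M N X') K f" by (simp only: eq)
  also have "\<dots> = distr M K (\<lambda>\<omega>. f (X' \<omega>))"
    by (subst distr_distr) (auto simp: comp_def)
  finally show ?thesis .
qed

locale nonneg_pairwise_iid = prob_space +
  fixes X :: "nat \<Rightarrow> 'a \<Rightarrow> real"
  assumes rv[measurable]: "\<And>i. X i \<in> borel_measurable M"
    and nn: "\<And>i \<omega>. 0 \<le> X i \<omega>"
    and ident: "\<And>i. distr M borel (X i) = distr M borel (X 0)"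
    and indep: "\<And>i j. i \<noteq> j \<Longrightarrow> indep_var borel (X i) borel (X j)"
    and int0: "integrable M (X 0)"
begin

lemma integral_ident:
  fixes h :: "real \<Rightarrow> real"
  assumes [measurable]: "h \<in> borel_measurable borel"
  shows "(\<integral>\<omega>. h (X i \<omega>) \<partial>M) = (\<integral>\<omega>. h (X 0 \<omega>) \<partial>M)"
proof -
  have "(\<integral>\<omega>. h (X i \<omega>) \<partial>M) = integral\<^sup>L (distr M borel (X i)) h"
    by (rule Bochner_Integration.integral_distr[OF rv assms, symmetric])
  also have "\<dots> = integral\<^sup>L (distr M borel (X 0)) h" by (simp only: ident[of i])
  also have "\<dots> = (\<integral>\<omega>. h (X 0 \<omega>) \<partial>M)" by (rule Bochner_Integration.integral_distr[OF rv assms])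
  finally show ?thesis .
qed

lemma prob_ident:
  assumes [measurable]: "A \<in> sets borel"
  shows "prob {\<omega>\<in>space M. X i \<omega> \<in> A} = prob {\<omega>\<in>space M. X 0 \<omega> \<in> A}"
proof -
  have "prob {\<omega>\<in>space M. X i \<omega> \<in> A} = measure (distr M borel (X i)) A"
    by (subst measure_distr) (auto intro!: arg_cong[where f=prob])
  also have "\<dots> = measure (distr M borel (X 0)) A" by (simp only: ident[of i])
  also have "\<dots> = prob {\<omega>\<in>space M. X 0 \<omega> \<in> A}"
    by (subst measure_distr) (auto intro!: arg_cong[where f=prob])
  finally show ?thesis .
qed

definition "\<mu> = expectation (X 0)"
definition "Y i \<omega> = trunc_at i (X i \<omega>)"
definition "m i = expectation (Y i)"
definition "v i = expectation (\<lambda>\<omega>. (trunc_at i (X 0 \<omega>))^2)"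

lemma Y_measurable[measurable]: "Y i \<in> borel_measurable M"
  unfolding Y_def by measurable

lemma Y_bounds: "0 \<le> Y i \<omega>" "Y i \<omega> \<le> real (Suc i)"
  unfolding Y_def using trunc_at_bounds nn by auto

lemma Y_integrable: "integrable M (Y i)"
proof (rule integrable_const_bound[where B="real (Suc i)"])
  show "AE x in M. norm (Y i x) \<le> real (Suc i)"
    using Y_bounds[of i] by (auto simp: abs_of_nonneg simp del: of_nat_Suc)
qed auto

lemma m_eq: "m i = (\<integral>\<omega>. trunc_at i (X 0 \<omega>) \<partial>M)"
  unfolding m_def Y_def by (rule integral_ident) measurable

lemma eventually_eq_trunc: "AE \<omega> in M. eventually (\<lambda>n. X n \<omega> = Y n \<omega>) sequentially"
proof -
  define A where "A n = {\<omega>\<in>space M. real (Suc n) < X n \<omega>}" for n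
  have [measurable]: "A n \<in> sets M" for n unfolding A_def by measurable
  have pA: "prob (A n) = prob {\<omega>\<in>space M. X 0 \<omega> \<in> {real (Suc n)<..}}" for n
    unfolding A_def using prob_ident[of "{real (Suc n)<..}" n] by simp
  have sumA: "(\<Sum>n<K. prob (A n)) \<le> \<mu>" for K
  proof -
    have "(\<Sum>n<K. prob (A n)) = (\<Sum>n<K. \<integral>\<omega>. indicator {\<omega>\<in>space M. X 0 \<omega> \<in> {real (Suc n)<..}} \<omega> \<partial>M)"
      by (simp add: pA)
    also have "\<dots> = (\<integral>\<omega>. (\<Sum>n<K. indicator {\<omega>\<in>space M. X 0 \<omega> \<in> {real (Suc n)<..}} \<omega>) \<partial>M)"
      by (rule Bochner_Integration.integral_sum[symmetric]) (intro integrable_real_indicator; measurable?; simp add: less_top[symmetric])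
    also have "\<dots> \<le> (\<integral>\<omega>. X 0 \<omega> \<partial>M)"
    proof (rule integral_mono)
      show "integrable M (\<lambda>\<omega>. \<Sum>n<K. indicator {\<omega>\<in>space M. X 0 \<omega> \<in> {real (Suc n)<..}} \<omega> :: real)"
        by (intro Bochner_Integration.integrable_sum integrable_real_indicator; measurable?; simp add: less_top[symmetric])
      show "integrable M (X 0)" by (rule int0)
      fix \<omega> assume "\<omega> \<in> space M"
      then have "(\<Sum>n<K. indicator {\<omega>\<in>space M. X 0 \<omega> \<in> {real (Suc n)<..}} \<omega> :: real)
          = (\<Sum>n<K. if real (Suc n) < X 0 \<omega> then 1 else 0)"
        by (intro sum.cong) (auto simp: indicator_def)
      also have "\<dots> \<le> X 0 \<omega>" by (rule sum_Suc_less_le[OF nn])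
      finally show "(\<Sum>n<K. indicator {\<omega>\<in>space M. X 0 \<omega> \<in> {real (Suc n)<..}} \<omega> :: real) \<le> X 0 \<omega>" .
    qed
    finally show ?thesis unfolding \<mu>_def .
  qed
  have "summable (\<lambda>n. prob (A n))"
    by (rule summableI_nonneg_bounded[OF _ sumA]) auto
  then have "AE \<omega> in M. eventually (\<lambda>n. \<omega> \<in> space M - A n) sequentially"
    by (intro borel_cantelli_AE1) (auto simp: less_top[symmetric])
  then show ?thesis
  proof (rule AE_mp, intro AE_I2 impI)
    fix \<omega> assume "\<omega> \<in> space M" and ev: "eventually (\<lambda>n. \<omega> \<in> space M - A n) sequentially"
    show "eventually (\<lambda>n. X n \<omega> = Y n \<omega>) sequentially"
      using ev by eventually_elim (auto simp: A_def Y_def trunc_at_def \<open>\<omega> \<in> space M\<close>)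
  qed
qed

lemma trunc_mean_tendsto: "m \<longlonglongrightarrow> \<mu>"
proof -
  have "(\<lambda>i. \<integral>\<omega>. trunc_at i (X 0 \<omega>) \<partial>M) \<longlonglongrightarrow> (\<integral>\<omega>. X 0 \<omega> \<partial>M)"
  proof (rule integral_dominated_convergence[where w="X 0"])
    show "integrable M (X 0)" by (rule int0)
    show "AE \<omega> in M. (\<lambda>i. trunc_at i (X 0 \<omega>)) \<longlonglongrightarrow> X 0 \<omega>"
    proof (intro AE_I2 tendsto_eventually)
      fix \<omega>
      obtain N where "X 0 \<omega> \<le> real N" using real_arch_simple by blast
      then show "eventually (\<lambda>i. trunc_at i (X 0 \<omega>) = X 0 \<omega>) sequentially"
        unfolding eventually_sequentially trunc_at_def by (intro exI[of _ N]) auto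
    qed
    show "AE \<omega> in M. norm (trunc_at i (X 0 \<omega>)) \<le> X 0 \<omega>" for i
      by (intro AE_I2) (auto simp: trunc_at_def nn abs_of_nonneg)
  qed auto
  then show ?thesis unfolding m_eq[abs_def] \<mu>_def .
qed

definition "c i \<omega> = Y i \<omega> - m i"

lemma c_measurable[measurable]: "c i \<in> borel_measurable M"
  unfolding c_def by measurable

lemma m_bounds: "0 \<le> m i" "m i \<le> real (Suc i)"
proof -
  show "0 \<le> m i" unfolding m_def by (rule Bochner_Integration.integral_nonneg) (simp add: Y_bounds)
  have "m i \<le> expectation (\<lambda>_. real (Suc i))"
    unfolding m_def by (rule Bochner_Integration.integral_mono[OF Y_integrable]) (auto simp: Y_bounds simp del: of_nat_Suc)
  then show "m i \<le> real (Suc i)" by (simp add: prob_space del: of_nat_Suc)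
qed

lemma c_bound: "\<bar>c i \<omega>\<bar> \<le> real (Suc i)"
  using Y_bounds[of i \<omega>] m_bounds[of i] unfolding c_def by (simp del: of_nat_Suc)

lemma c_integrable: "integrable M (c i)"
  by (rule integrable_const_bound[where B="real (Suc i)"]) (auto simp: c_bound simp del: of_nat_Suc)

lemma cc_integrable: "integrable M (\<lambda>\<omega>. c i \<omega> * c j \<omega>)"
proof (rule integrable_const_bound[where B="real (Suc i) * real (Suc j)"])
  show "AE x in M. norm (c i x * c j x) \<le> real (Suc i) * real (Suc j)"
  proof (intro AE_I2)
    fix x
    have "\<bar>c i x\<bar> * \<bar>c j x\<bar> \<le> real (Suc i) * real (Suc j)"
      by (intro mult_mono c_bound) auto
    then show "norm (c i x * c j x) \<le> real (Suc i) * real (Suc j)" by (simp add: abs_mult del: of_nat_Suc)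
  qed
qed auto

lemma c_mean: "expectation (c i) = 0"
  unfolding c_def using Y_integrable[of i] by (simp add: m_def prob_space)

lemma c_cross: assumes "i \<noteq> j" shows "expectation (\<lambda>\<omega>. c i \<omega> * c j \<omega>) = 0"
proof -
  have "indep_var borel ((\<lambda>x. trunc_at i x - m i) \<circ> X i) borel ((\<lambda>x. trunc_at j x - m j) \<circ> X j)"
    by (rule indep_var_compose[OF indep[OF assms]]) auto
  moreover have "(\<lambda>x. trunc_at i x - m i) \<circ> X i = c i" "(\<lambda>x. trunc_at j x - m j) \<circ> X j = c j"
    by (auto simp: c_def Y_def fun_eq_iff)
  ultimately have ind: "indep_var borel (c i) borel (c j)" by simp
  have "expectation (\<lambda>\<omega>. c i \<omega> * c j \<omega>) = expectation (c i) * expectation (c j)"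
    by (rule indep_var_lebesgue_integral[OF ind c_integrable c_integrable])
  then show ?thesis by (simp add: c_mean)
qed

lemma c_diag: "expectation (\<lambda>\<omega>. c i \<omega> * c i \<omega>) \<le> v i"
proof -
  have sqint: "integrable M (\<lambda>x. (Y i x)\<^sup>2)"
  proof (rule integrable_const_bound[where B="real (Suc i) * real (Suc i)"])
    show "AE x in M. norm ((Y i x)\<^sup>2) \<le> real (Suc i) * real (Suc i)"
      using Y_bounds[of i] by (intro AE_I2) (simp add: power2_eq_square mult_mono del: of_nat_Suc)
  qed auto
  have "expectation (\<lambda>\<omega>. c i \<omega> * c i \<omega>) = variance (Y i)"
    by (simp add: c_def m_def power2_eq_square)
  also have "\<dots> = expectation (\<lambda>x. (Y i x)\<^sup>2) - (expectation (Y i))\<^sup>2"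
    by (rule variance_eq[OF Y_integrable sqint])
  also have "\<dots> \<le> expectation (\<lambda>x. (Y i x)\<^sup>2)" by simp
  also have "\<dots> = v i"
    unfolding v_def Y_def by (rule integral_ident) measurable
  finally show ?thesis .
qed

definition "Sp k \<omega> = (\<Sum>i<k. Y i \<omega>)"

lemma Sp_measurable[measurable]: "Sp k \<in> borel_measurable M"
  unfolding Sp_def by measurable

lemma var_Sp: "expectation (\<lambda>\<omega>. (\<Sum>i<k. c i \<omega>)^2) \<le> (\<Sum>i<k. v i)"
proof -
  have "expectation (\<lambda>\<omega>. (\<Sum>i<k. c i \<omega>)^2) = expectation (\<lambda>\<omega>. \<Sum>i<k. \<Sum>j<k. c i \<omega> * c j \<omega>)"
    by (simp add: power2_eq_square sum_product)
  also have "\<dots> = (\<Sum>i<k. \<Sum>j<k. expectation (\<lambda>\<omega>. c i \<omega> * c j \<omega>))"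
    by (simp add: Bochner_Integration.integral_sum Bochner_Integration.integrable_sum cc_integrable)
  also have "\<dots> = (\<Sum>i<k. expectation (\<lambda>\<omega>. c i \<omega> * c i \<omega>))"
  proof (rule sum.cong[OF refl])
    fix i assume i: "i \<in> {..<k}"
    have "(\<Sum>j<k. expectation (\<lambda>\<omega>. c i \<omega> * c j \<omega>)) =
        expectation (\<lambda>\<omega>. c i \<omega> * c i \<omega>) + (\<Sum>j\<in>{..<k} - {i}. expectation (\<lambda>\<omega>. c i \<omega> * c j \<omega>))"
      using i by (subst sum.remove[of _ i]) auto
    also have "(\<Sum>j\<in>{..<k} - {i}. expectation (\<lambda>\<omega>. c i \<omega> * c j \<omega>)) = 0"
      by (intro sum.neutral) (auto intro: c_cross)
    finally show "(\<Sum>j<k. expectation (\<lambda>\<omega>. c i \<omega> * c j \<omega>)) = expectation (\<lambda>\<omega>. c i \<omega> * c i \<omega>)"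
      by simp
  qed
  also have "\<dots> \<le> (\<Sum>i<k. v i)" by (intro sum_mono c_diag)
  finally show ?thesis .
qed

lemma Sp_mean: "expectation (Sp k) = (\<Sum>i<k. m i)"
  unfolding Sp_def m_def by (rule Bochner_Integration.integral_sum) (rule Y_integrable)

lemma Chebyshev_Sp:
  assumes e: "e > 0"
  shows "prob {\<omega>\<in>space M. e \<le> \<bar>Sp k \<omega> - (\<Sum>i<k. m i)\<bar>} \<le> (\<Sum>i<k. v i) / e^2"
proof -
  have sqint: "integrable M (\<lambda>x. (Sp k x)^2)"
  proof (rule integrable_const_bound[where B="(\<Sum>i<k. real (Suc i))^2"])
    show "AE x in M. norm ((Sp k x)^2) \<le> (\<Sum>i<k. real (Suc i))^2"
    proof (intro AE_I2)
      fix x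
      have "0 \<le> Sp k x" "Sp k x \<le> (\<Sum>i<k. real (Suc i))"
        unfolding Sp_def using Y_bounds by (auto intro: sum_nonneg sum_mono simp del: of_nat_Suc)
      then show "norm ((Sp k x)^2) \<le> (\<Sum>i<k. real (Suc i))^2"
        by (simp add: power_mono del: of_nat_Suc)
    qed
  qed auto
  have "prob {\<omega>\<in>space M. e \<le> \<bar>Sp k \<omega> - expectation (Sp k)\<bar>} \<le> variance (Sp k) / e^2"
    by (rule Chebyshev_inequality[OF _ sqint e]) measurable
  moreover have "variance (Sp k) = expectation (\<lambda>\<omega>. (\<Sum>i<k. c i \<omega>)^2)"
  proof -
    have "\<And>\<omega>. Sp k \<omega> - (\<Sum>i<k. m i) = (\<Sum>i<k. c i \<omega>)"
      by (simp add: Sp_def c_def sum_subtractf)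
    then show ?thesis by (simp only: Sp_mean)
  qed
  ultimately have "prob {\<omega>\<in>space M. e \<le> \<bar>Sp k \<omega> - (\<Sum>i<k. m i)\<bar>} \<le> expectation (\<lambda>\<omega>. (\<Sum>i<k. c i \<omega>)^2) / e^2"
    by (simp only: Sp_mean)
  also have "\<dots> \<le> (\<Sum>i<k. v i) / e^2"
    by (rule divide_right_mono[OF var_Sp]) simp
  finally show ?thesis .
qed

lemma trunc_at_sq_integrable: "integrable M (\<lambda>\<omega>. (trunc_at i (X 0 \<omega>))^2)"
proof (rule integrable_const_bound[where B="real (Suc i) * real (Suc i)"])
  show "AE x in M. norm ((trunc_at i (X 0 x))^2) \<le> real (Suc i) * real (Suc i)"
  proof (intro AE_I2)
    fix x
    have "0 \<le> trunc_at i (X 0 x)" "trunc_at i (X 0 x) \<le> real (Suc i)" using trunc_at_bounds nn by auto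
    then show "norm ((trunc_at i (X 0 x))^2) \<le> real (Suc i) * real (Suc i)"
      by (simp add: power2_eq_square mult_mono del: of_nat_Suc)
  qed
qed measurable

lemma v_nonneg: "v i \<ge> 0"
  unfolding v_def by (rule Bochner_Integration.integral_nonneg) simp

lemma summable_variance_floor_pow:
  assumes a: "\<alpha> > 1"
  shows "summable (\<lambda>j. (\<Sum>i<floor_pow \<alpha> j. v i) / (real (floor_pow \<alpha> j))^2)"
proof (rule summableI_nonneg_bounded)
  show "0 \<le> (\<Sum>i<floor_pow \<alpha> j. v i) / (real (floor_pow \<alpha> j))^2" for j
    by (intro divide_nonneg_nonneg sum_nonneg v_nonneg) auto
  fix K
  have "(\<Sum>j<K. (\<Sum>i<floor_pow \<alpha> j. v i) / (real (floor_pow \<alpha> j))^2)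
      = (\<Sum>j<K. expectation (\<lambda>\<omega>. (\<Sum>i<floor_pow \<alpha> j. (trunc_at i (X 0 \<omega>))^2) / (real (floor_pow \<alpha> j))^2))"
  proof (rule sum.cong[OF refl])
    fix j
    show "(\<Sum>i<floor_pow \<alpha> j. v i) / (real (floor_pow \<alpha> j))^2
        = expectation (\<lambda>\<omega>. (\<Sum>i<floor_pow \<alpha> j. (trunc_at i (X 0 \<omega>))^2) / (real (floor_pow \<alpha> j))^2)"
      unfolding v_def integral_divide_zero
      by (subst Bochner_Integration.integral_sum) (auto intro: trunc_at_sq_integrable)
  qed
  also have "\<dots> = expectation (\<lambda>\<omega>. \<Sum>j<K. (\<Sum>i<floor_pow \<alpha> j. (trunc_at i (X 0 \<omega>))^2) / (real (floor_pow \<alpha> j))^2)"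
    by (rule Bochner_Integration.integral_sum[symmetric])
       (intro integrable_divide_zero Bochner_Integration.integrable_sum trunc_at_sq_integrable)
  also have "\<dots> \<le> expectation (\<lambda>\<omega>. (2*\<alpha>/(\<alpha>-1)) * X 0 \<omega>)"
  proof (rule Bochner_Integration.integral_mono)
    show "integrable M (\<lambda>\<omega>. \<Sum>j<K. (\<Sum>i<floor_pow \<alpha> j. (trunc_at i (X 0 \<omega>))^2) / (real (floor_pow \<alpha> j))^2)"
      by (intro integrable_divide_zero Bochner_Integration.integrable_sum trunc_at_sq_integrable)
    show "integrable M (\<lambda>\<omega>. (2*\<alpha>/(\<alpha>-1)) * X 0 \<omega>)"
      using int0 by simp
    show "(\<Sum>j<K. (\<Sum>i<floor_pow \<alpha> j. (trunc_at i (X 0 \<omega>))^2) / (real (floor_pow \<alpha> j))^2) \<le> (2*\<alpha>/(\<alpha>-1)) * X 0 \<omega>" for \<omega>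
      by (rule sum_trunc_at_sq_floor_pow_le[OF a nn])
  qed
  finally show "(\<Sum>j<K. (\<Sum>i<floor_pow \<alpha> j. v i) / (real (floor_pow \<alpha> j))^2) \<le> expectation (\<lambda>\<omega>. (2*\<alpha>/(\<alpha>-1)) * X 0 \<omega>)" .
qed

lemma subseq_Sp_deviation:
  assumes a: "\<alpha> > 1" and e: "e > 0"
  shows "AE \<omega> in M. eventually (\<lambda>j. \<bar>Sp (floor_pow \<alpha> j) \<omega> - (\<Sum>i<floor_pow \<alpha> j. m i)\<bar> < e * real (floor_pow \<alpha> j)) sequentially"
proof -
  define A where "A j = {\<omega>\<in>space M. e * real (floor_pow \<alpha> j) \<le> \<bar>Sp (floor_pow \<alpha> j) \<omega> - (\<Sum>i<floor_pow \<alpha> j. m i)\<bar>}" for j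
  have [measurable]: "A j \<in> sets M" for j unfolding A_def by measurable
  have pA: "prob (A j) \<le> ((\<Sum>i<floor_pow \<alpha> j. v i) / (real (floor_pow \<alpha> j))^2) / e^2" for j
  proof -
    have kp: "real (floor_pow \<alpha> j) > 0" using floor_pow_bounds(3)[OF a] by simp
    have "prob (A j) \<le> (\<Sum>i<floor_pow \<alpha> j. v i) / (e * real (floor_pow \<alpha> j))^2"
      unfolding A_def by (rule Chebyshev_Sp) (use e kp in simp)
    also have "\<dots> = ((\<Sum>i<floor_pow \<alpha> j. v i) / (real (floor_pow \<alpha> j))^2) / e^2"
      by (simp add: power_mult_distrib field_simps)
    finally show ?thesis .
  qed
  have "summable (\<lambda>j. ((\<Sum>i<floor_pow \<alpha> j. v i) / (real (floor_pow \<alpha> j))^2) / e^2)"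
    by (rule summable_divide[OF summable_variance_floor_pow[OF a]])
  then have "summable (\<lambda>j. prob (A j))"
    by (rule summable_comparison_test'[where N=0]) (use pA in auto)
  then have "AE \<omega> in M. eventually (\<lambda>j. \<omega> \<in> space M - A j) sequentially"
    by (intro borel_cantelli_AE1) (auto simp: less_top[symmetric])
  then show ?thesis
  proof (rule AE_mp, intro AE_I2 impI)
    fix \<omega> assume "\<omega> \<in> space M" and ev: "eventually (\<lambda>j. \<omega> \<in> space M - A j) sequentially"
    show "eventually (\<lambda>j. \<bar>Sp (floor_pow \<alpha> j) \<omega> - (\<Sum>i<floor_pow \<alpha> j. m i)\<bar> < e * real (floor_pow \<alpha> j)) sequentially"
      using ev by eventually_elim (auto simp: A_def \<open>\<omega> \<in> space M\<close>)
  qed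
qed

lemma subseq_Sp:
  assumes a: "\<alpha> > 1"
  shows "AE \<omega> in M. (\<lambda>j. Sp (floor_pow \<alpha> j) \<omega> / real (floor_pow \<alpha> j)) \<longlonglongrightarrow> \<mu>"
proof -
  have "AE \<omega> in M. \<forall>l::nat. eventually (\<lambda>j. \<bar>Sp (floor_pow \<alpha> j) \<omega> - (\<Sum>i<floor_pow \<alpha> j. m i)\<bar> < (1 / real (Suc l)) * real (floor_pow \<alpha> j)) sequentially"
    unfolding AE_all_countable by (intro allI subseq_Sp_deviation[OF a]) simp
  then show ?thesis
  proof (rule AE_mp, intro AE_I2 impI)
    fix \<omega> assume H: "\<forall>l::nat. eventually (\<lambda>j. \<bar>Sp (floor_pow \<alpha> j) \<omega> - (\<Sum>i<floor_pow \<alpha> j. m i)\<bar> < (1 / real (Suc l)) * real (floor_pow \<alpha> j)) sequentially"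
    have d: "(\<lambda>j. (Sp (floor_pow \<alpha> j) \<omega> - (\<Sum>i<floor_pow \<alpha> j. m i)) / real (floor_pow \<alpha> j)) \<longlonglongrightarrow> 0"
    proof (rule LIMSEQ_I)
      fix r :: real assume r: "r > 0"
      obtain l where l: "1 / real (Suc l) < r" using r by (metis nat_approx_posE)
      from H[rule_format, of l] obtain N where N: "\<And>j. j \<ge> N \<Longrightarrow> \<bar>Sp (floor_pow \<alpha> j) \<omega> - (\<Sum>i<floor_pow \<alpha> j. m i)\<bar> < (1 / real (Suc l)) * real (floor_pow \<alpha> j)"
        unfolding eventually_sequentially by auto
      show "\<exists>no. \<forall>j\<ge>no. norm ((Sp (floor_pow \<alpha> j) \<omega> - (\<Sum>i<floor_pow \<alpha> j. m i)) / real (floor_pow \<alpha> j) - 0) < r"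
      proof (intro exI allI impI)
        fix j assume "j \<ge> N"
        from N[OF this] have *: "\<bar>Sp (floor_pow \<alpha> j) \<omega> - (\<Sum>i<floor_pow \<alpha> j. m i)\<bar> / real (floor_pow \<alpha> j) < 1 / real (Suc l)"
          using floor_pow_bounds(3)[OF a, of j] by (simp add: field_simps del: of_nat_Suc)
        show "norm ((Sp (floor_pow \<alpha> j) \<omega> - (\<Sum>i<floor_pow \<alpha> j. m i)) / real (floor_pow \<alpha> j) - 0) < r"
          using * l by (simp add: abs_divide del: of_nat_Suc)
      qed
    qed
    have ces: "(\<lambda>j. (\<Sum>i<floor_pow \<alpha> j. m i) / real (floor_pow \<alpha> j)) \<longlonglongrightarrow> \<mu>"
      using filterlim_compose[OF tendsto_Cesaro_mean[OF trunc_mean_tendsto] filterlim_floor_pow[OF a]] by simp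
    have "(\<lambda>j. (Sp (floor_pow \<alpha> j) \<omega> - (\<Sum>i<floor_pow \<alpha> j. m i)) / real (floor_pow \<alpha> j) + (\<Sum>i<floor_pow \<alpha> j. m i) / real (floor_pow \<alpha> j)) \<longlonglongrightarrow> 0 + \<mu>"
      by (rule tendsto_add[OF d ces])
    then show "(\<lambda>j. Sp (floor_pow \<alpha> j) \<omega> / real (floor_pow \<alpha> j)) \<longlonglongrightarrow> \<mu>"
      by (simp add: diff_divide_distrib)
  qed
qed

definition "S k \<omega> = (\<Sum>i<k. X i \<omega>)"

lemma subseq_S:
  assumes a: "\<alpha> > 1"
  shows "AE \<omega> in M. (\<lambda>j. S (floor_pow \<alpha> j) \<omega> / real (floor_pow \<alpha> j)) \<longlonglongrightarrow> \<mu>"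
  using subseq_Sp[OF a] eventually_eq_trunc
proof (eventually_elim)
  case (elim \<omega>)
  from elim(2) obtain N where N: "\<And>n. n \<ge> N \<Longrightarrow> X n \<omega> = Y n \<omega>"
    unfolding eventually_sequentially by auto
  define D where "D = (\<Sum>i<N. X i \<omega> - Y i \<omega>)"
  have SD: "S k \<omega> = Sp k \<omega> + D" if k: "k \<ge> N" for k
  proof -
    have "S k \<omega> - Sp k \<omega> = (\<Sum>i<k. X i \<omega> - Y i \<omega>)"
      by (simp add: S_def Sp_def sum_subtractf)
    also have "{..<k} = {..<N} \<union> {N..<k}" using k by auto
    also have "(\<Sum>i\<in>{..<N} \<union> {N..<k}. X i \<omega> - Y i \<omega>) = D + (\<Sum>i\<in>{N..<k}. X i \<omega> - Y i \<omega>)"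
      unfolding D_def by (subst sum.union_disjoint) auto
    also have "(\<Sum>i\<in>{N..<k}. X i \<omega> - Y i \<omega>) = 0"
      by (intro sum.neutral) (auto simp: N)
    finally show ?thesis by simp
  qed
  have D0: "(\<lambda>j. D / real (floor_pow \<alpha> j)) \<longlonglongrightarrow> 0"
    by (rule tendsto_divide_0[OF tendsto_const filterlim_at_top_imp_at_infinity[OF filterlim_real_floor_pow[OF a]]])
  have "(\<lambda>j. Sp (floor_pow \<alpha> j) \<omega> / real (floor_pow \<alpha> j) + D / real (floor_pow \<alpha> j)) \<longlonglongrightarrow> \<mu> + 0"
    by (rule tendsto_add[OF elim(1) D0])
  then have lim: "(\<lambda>j. Sp (floor_pow \<alpha> j) \<omega> / real (floor_pow \<alpha> j) + D / real (floor_pow \<alpha> j)) \<longlonglongrightarrow> \<mu>" by simp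
  have ev: "eventually (\<lambda>j. Sp (floor_pow \<alpha> j) \<omega> / real (floor_pow \<alpha> j) + D / real (floor_pow \<alpha> j) = S (floor_pow \<alpha> j) \<omega> / real (floor_pow \<alpha> j)) sequentially"
  proof -
    have "eventually (\<lambda>j. N \<le> floor_pow \<alpha> j) sequentially"
      using filterlim_floor_pow[OF a] by (simp add: filterlim_at_top)
    then show ?thesis
      by eventually_elim (simp add: SD add_divide_distrib)
  qed
  show ?case by (rule Lim_transform_eventually[OF lim ev])
qed

lemma S_mono: "mono (\<lambda>k. S k \<omega>)"
  unfolding mono_iff_le_Suc S_def by (simp add: nn)

lemma S_nonneg: "S k \<omega> \<ge> 0"
  unfolding S_def by (simp add: nn sum_nonneg)

theorem averages_tendsto: "AE \<omega> in M. (\<lambda>n. S n \<omega> / real n) \<longlonglongrightarrow> \<mu>"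
proof -
  define al where "al l = 1 + 1 / real (Suc l)" for l
  have al1: "al l > 1" for l unfolding al_def by simp
  have "AE \<omega> in M. \<forall>l. (\<lambda>j. S (floor_pow (al l) j) \<omega> / real (floor_pow (al l) j)) \<longlonglongrightarrow> \<mu>"
    unfolding AE_all_countable by (intro allI subseq_S al1)
  then show ?thesis
  proof (rule AE_mp, intro AE_I2 impI)
    fix \<omega> assume H: "\<forall>l. (\<lambda>j. S (floor_pow (al l) j) \<omega> / real (floor_pow (al l) j)) \<longlonglongrightarrow> \<mu>"
    define dl where "dl l = 1 / real (Suc l)" for l
    have dl0: "dl l > 0" for l unfolding dl_def by simp
    have dlim: "dl \<longlonglongrightarrow> 0" unfolding dl_def by (rule LIMSEQ_inverse_real_of_nat[unfolded inverse_eq_divide])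
    have allim: "al \<longlonglongrightarrow> 1"
    proof -
      have "(\<lambda>l. 1 + dl l) \<longlonglongrightarrow> 1 + 0" by (intro tendsto_intros dlim)
      then show ?thesis by (simp add: al_def[abs_def] dl_def)
    qed
    show "(\<lambda>n. S n \<omega> / real n) \<longlonglongrightarrow> \<mu>"
    proof (rule LIMSEQ_eventual_bounds[where lo="\<lambda>l. (\<mu> - dl l)/(al l + dl l)" and up="\<lambda>l. (\<mu> + dl l)*(al l + dl l)"])
      fix l
      show "eventually (\<lambda>n. (\<mu> - dl l)/(al l + dl l) \<le> S n \<omega> / real n \<and> S n \<omega> / real n \<le> (\<mu> + dl l)*(al l + dl l)) sequentially"
        by (rule monotone_average_eventual_bounds[OF S_mono S_nonneg floor_pow_mono[OF al1] floor_pow_bounds(3)[OF al1] floor_pow_unbounded[OF al1] floor_pow_ratio[OF al1] H[rule_format] dl0])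
           (use al1[of l] in simp)
    next
      have "(\<lambda>l. (\<mu> - dl l)/(al l + dl l)) \<longlonglongrightarrow> (\<mu> - 0)/(1 + 0)"
        by (intro tendsto_intros dlim allim) simp
      then show "(\<lambda>l. (\<mu> - dl l)/(al l + dl l)) \<longlonglongrightarrow> \<mu>" by simp
    next
      have "(\<lambda>l. (\<mu> + dl l)*(al l + dl l)) \<longlonglongrightarrow> (\<mu> + 0)*(1 + 0)"
        by (intro tendsto_intros dlim allim)
      then show "(\<lambda>l. (\<mu> + dl l)*(al l + dl l)) \<longlonglongrightarrow> \<mu>" by simp
    qed
  qed
qed

end

lemma integral_uniform_Icc:
  fixes f :: "real \<Rightarrow> real"
  assumes "a < b" and [measurable]: "f \<in> borel_measurable borel"
  shows "integral\<^sup>L (uniform_measure lborel {a..b}) f = (LBINT x. indicator {a..b} x * f x) / (b - a)"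
proof -
  have "uniform_measure lborel {a..b} = density lborel (\<lambda>x. ennreal (indicator {a..b} x / (b - a)))"
    unfolding uniform_measure_def
  proof (rule density_cong)
    show "AE x in lborel. indicator {a..b} x / emeasure lborel {a..b} = ennreal (indicator {a..b} x / (b - a))"
      using \<open>a < b\<close> by (intro AE_I2) (auto simp: indicator_def divide_ennreal ennreal_1[symmetric] simp del: ennreal_1)
  qed auto
  then show ?thesis
    using \<open>a < b\<close> by (simp add: integral_density mult.commute[of _ "f _"])
qed

context prob_space
begin

lemma strong_law_nonneg_compose:
  fixes X :: "nat \<Rightarrow> 'a \<Rightarrow> real" and f :: "real \<Rightarrow> real"
  assumes rv[measurable]: "\<And>i. X i \<in> borel_measurable M"
    and ident: "\<And>i. distr M borel (X i) = distr M borel (X 0)"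
    and indep: "\<And>i j. i \<noteq> j \<Longrightarrow> indep_var borel (X i) borel (X j)"
    and f[measurable]: "f \<in> borel_measurable borel" and f_nonneg: "\<And>x. f x \<ge> 0"
    and int: "integrable M (\<lambda>\<omega>. f (X 0 \<omega>))"
  shows "AE \<omega> in M. (\<lambda>n. (\<Sum>i<n. f (X i \<omega>)) / real n) \<longlonglongrightarrow> (\<integral>\<omega>. f (X 0 \<omega>) \<partial>M)"
proof -
  interpret Q: nonneg_pairwise_iid M "\<lambda>i \<omega>. f (X i \<omega>)"
  proof unfold_locales
    show "(\<lambda>\<omega>. f (X i \<omega>)) \<in> borel_measurable M" for i by measurable
    show "0 \<le> f (X i \<omega>)" for i \<omega> by (rule f_nonneg)
    show "distr M borel (\<lambda>\<omega>. f (X i \<omega>)) = distr M borel (\<lambda>\<omega>. f (X 0 \<omega>))" for i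
      by (rule distr_compose_eq[OF rv rv f ident[of i]])
    show "indep_var borel (\<lambda>\<omega>. f (X i \<omega>)) borel (\<lambda>\<omega>. f (X j \<omega>))" if "i \<noteq> j" for i j
      using indep_var_compose[OF indep[OF that] f f] by (simp add: comp_def)
  qed (rule int)
  show ?thesis using Q.averages_tendsto unfolding Q.S_def Q.\<mu>_def .
qed

theorem strong_law_pairwise_iid:
  fixes X :: "nat \<Rightarrow> 'a \<Rightarrow> real"
  assumes rv[measurable]: "\<And>i. X i \<in> borel_measurable M"
    and ident: "\<And>i. distr M borel (X i) = distr M borel (X 0)"
    and indep: "\<And>i j. i \<noteq> j \<Longrightarrow> indep_var borel (X i) borel (X j)"
    and int: "integrable M (X 0)"
  shows "AE \<omega> in M. (\<lambda>n. (\<Sum>i<n. X i \<omega>) / real n) \<longlonglongrightarrow> expectation (X 0)"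
proof -
  have pos: "AE \<omega> in M. (\<lambda>n. (\<Sum>i<n. max (X i \<omega>) 0) / real n) \<longlonglongrightarrow> (\<integral>\<omega>. max (X 0 \<omega>) 0 \<partial>M)"
    by (rule strong_law_nonneg_compose[where f="\<lambda>x. max x 0"]) (use ident indep int in auto)
  have neg: "AE \<omega> in M. (\<lambda>n. (\<Sum>i<n. max (- X i \<omega>) 0) / real n) \<longlonglongrightarrow> (\<integral>\<omega>. max (- X 0 \<omega>) 0 \<partial>M)"
    by (rule strong_law_nonneg_compose[where f="\<lambda>x. max (- x) 0"]) (use ident indep int in auto)
  have "expectation (X 0) = (\<integral>\<omega>. max (X 0 \<omega>) 0 - max (- X 0 \<omega>) 0 \<partial>M)"
    by (rule Bochner_Integration.integral_cong) auto
  also have "\<dots> = (\<integral>\<omega>. max (X 0 \<omega>) 0 \<partial>M) - (\<integral>\<omega>. max (- X 0 \<omega>) 0 \<partial>M)"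
    using int by (intro Bochner_Integration.integral_diff) auto
  finally have E: "expectation (X 0) = \<dots>" .
  have split: "(\<Sum>i<n. X i \<omega>) / real n
      = (\<Sum>i<n. max (X i \<omega>) 0) / real n - (\<Sum>i<n. max (- X i \<omega>) 0) / real n" for n \<omega>
  proof -
    have "(\<Sum>i<n. X i \<omega>) = (\<Sum>i<n. max (X i \<omega>) 0 - max (- X i \<omega>) 0)"
      by (rule sum.cong) auto
    then show ?thesis
      by (simp add: diff_divide_distrib[symmetric] sum_subtractf)
  qed
  show ?thesis
    using pos neg by eventually_elim (unfold split E, rule tendsto_diff)
qed

lemma indep_vars_pair:
  assumes indep: "indep_vars (\<lambda>_. borel) Z I" and ij: "i \<in> I" "j \<in> I" "i \<noteq> j"
  shows "indep_var borel (Z i) borel (Z j)"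
proof -
  have "indep_var borel ((\<lambda>f. f i) \<circ> (\<lambda>\<omega>. restrict (\<lambda>i. Z i \<omega>) {i}))
      borel ((\<lambda>f. f j) \<circ> (\<lambda>\<omega>. restrict (\<lambda>i. Z i \<omega>) {j}))"
    using ij by (intro indep_var_compose[OF indep_var_restrict[OF indep]]) auto
  then show ?thesis by (simp add: comp_def)
qed

lemma strong_law_indep_vars_compose:
  assumes indep: "indep_vars (\<lambda>_. S) T {1..}"
    and ident: "\<And>i. 1 \<le> i \<Longrightarrow> distr M S (T i) = distr M S (T 1)"
    and h[measurable]: "h \<in> borel_measurable S"
    and int: "integrable M (\<lambda>\<omega>. h (T 1 \<omega>))"
  shows "AE \<omega> in M. (\<lambda>m. (\<Sum>i=1..m. h (T i \<omega>)) / real m) \<longlonglongrightarrow> (\<integral>\<omega>. h (T 1 \<omega>) \<partial>M)"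
proof -
  have T[measurable]: "T i \<in> measurable M S" if "1 \<le> i" for i
    using indep that unfolding indep_vars_def by auto
  have indep_h: "indep_vars (\<lambda>_. borel) (\<lambda>i \<omega>. h (T i \<omega>)) {1..}"
    by (rule indep_vars_compose2[OF indep]) simp
  have "AE \<omega> in M. (\<lambda>m. (\<Sum>j<m. h (T (Suc j) \<omega>)) / real m) \<longlonglongrightarrow> (\<integral>\<omega>. h (T (Suc 0) \<omega>) \<partial>M)"
  proof (rule strong_law_pairwise_iid)
    show "(\<lambda>\<omega>. h (T (Suc j) \<omega>)) \<in> borel_measurable M" for j
      by (rule measurable_compose[OF T h]) simp
    show "distr M borel (\<lambda>\<omega>. h (T (Suc j) \<omega>)) = distr M borel (\<lambda>\<omega>. h (T (Suc 0) \<omega>))" for j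
      by (rule distr_compose_eq[OF T T h]) (use ident[of "Suc j"] in simp_all)
    show "indep_var borel (\<lambda>\<omega>. h (T (Suc i) \<omega>)) borel (\<lambda>\<omega>. h (T (Suc j) \<omega>))" if "i \<noteq> j" for i j
      using indep_vars_pair[OF indep_h, of "Suc i" "Suc j"] that by simp
  qed (use int in simp)
  then show ?thesis by (simp add: sum.atLeast1_atMost_eq)
qed

lemma ratio_of_iid_averages_tendsto:
  fixes T :: "nat \<Rightarrow> 'a \<Rightarrow> 'b" and u v :: "'b \<Rightarrow> real"
  assumes indep: "indep_vars (\<lambda>_. S) T {1..}"
    and ident: "\<And>i. 1 \<le> i \<Longrightarrow> distr M S (T i) = distr M S (T 1)"
    and u: "u \<in> borel_measurable S" "integrable M (\<lambda>\<omega>. u (T 1 \<omega>))"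
    and v: "v \<in> borel_measurable S" "integrable M (\<lambda>\<omega>. v (T 1 \<omega>))"
    and v_mean: "(\<integral>\<omega>. v (T 1 \<omega>) \<partial>M) \<noteq> 0"
  shows "AE \<omega> in M. (\<lambda>m. (\<Sum>i=1..m. u (T i \<omega>)) / (\<Sum>i=1..m. v (T i \<omega>)))
    \<longlonglongrightarrow> (\<integral>\<omega>. u (T 1 \<omega>) \<partial>M) / (\<integral>\<omega>. v (T 1 \<omega>) \<partial>M)"
proof -
  have "AE \<omega> in M. (\<lambda>m. (\<Sum>i=1..m. u (T i \<omega>)) / real m) \<longlonglongrightarrow> (\<integral>\<omega>. u (T 1 \<omega>) \<partial>M)"
    by (rule strong_law_indep_vars_compose) (fact indep ident u)+
  moreover have "AE \<omega> in M. (\<lambda>m. (\<Sum>i=1..m. v (T i \<omega>)) / real m) \<longlonglongrightarrow> (\<integral>\<omega>. v (T 1 \<omega>) \<partial>M)"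
    by (rule strong_law_indep_vars_compose) (fact indep ident v)+
  ultimately show ?thesis
    by eventually_elim (rule tendsto_ratio_of_averages[OF _ _ v_mean])
qed

section \<open>Independent gains, uniform phase and the in-phase average\<close>

lemma indep_sets_indep_set:
  assumes indep: "indep_sets F I" and ij: "i \<in> I" "j \<in> I" "i \<noteq> j"
  shows "indep_set (F i) (F j)"
  unfolding indep_sets2_eq
proof (intro conjI ballI)
  show "F i \<subseteq> events" "F j \<subseteq> events"
    using indep ij by (auto simp: indep_sets_def)
  fix a b assume "a \<in> F i" "b \<in> F j"
  with indep_setsD[OF indep, of "{i, j}" "\<lambda>k. if k = i then a else b"] ij
  show "prob (a \<inter> b) = prob a * prob b" by (auto simp: Int_commute)
qed

text \<open>\<open>indep_var\<close> requires both variables to take values in one measurable space, so the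
  independence of random elements of different types provided by \<open>indep3\<close> is carried by the
  generated event families and only turned into \<open>indep_var\<close> after composing to a common space.\<close>

lemma indep_var_compose_of_indep_set:
  assumes indep: "indep_set {X -` A \<inter> space M | A. A \<in> sets S} {Y -` A \<inter> space M | A. A \<in> sets T}"
    and X[measurable]: "X \<in> measurable M S" and Y[measurable]: "Y \<in> measurable M T"
    and f[measurable]: "f \<in> measurable S N" and g[measurable]: "g \<in> measurable T N"
  shows "indep_var N (\<lambda>\<omega>. f (X \<omega>)) N (\<lambda>\<omega>. g (Y \<omega>))"
proof -
  have preimages_sub: "{(\<lambda>\<omega>. h (Z \<omega>)) -` A \<inter> space M | A. A \<in> sets N} \<subseteq> {Z -` B \<inter> space M | B. B \<in> sets R}"
    if Z: "Z \<in> measurable M R" and h: "h \<in> measurable R N" for Z h R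
  proof safe
    fix A assume "A \<in> sets N"
    then have "h -` A \<inter> space R \<in> sets R" using h by (rule measurable_sets[rotated])
    moreover have "(\<lambda>\<omega>. h (Z \<omega>)) -` A \<inter> space M = Z -` (h -` A \<inter> space R) \<inter> space M"
      using measurable_space[OF Z] by auto
    ultimately show "\<exists>B. (\<lambda>\<omega>. h (Z \<omega>)) -` A \<inter> space M = Z -` B \<inter> space M \<and> B \<in> sets R"
      by blast
  qed
  have "indep_sets (case_bool {(\<lambda>\<omega>. f (X \<omega>)) -` A \<inter> space M | A. A \<in> sets N}
      {(\<lambda>\<omega>. g (Y \<omega>)) -` A \<inter> space M | A. A \<in> sets N}) UNIV"
    using indep unfolding indep_set_def
    by (rule indep_sets_mono_sets) (simp split: bool.split add: preimages_sub X Y f g)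
  then show ?thesis
    unfolding indep_var_def indep_vars_def2
    by (auto split: bool.split elim!: indep_sets_mono_sets) (blast+)
qed

lemma indep3_indep_set:
  assumes "indep3 M N1 X1 N2 X2 N3 X3"
  shows "indep_set {X1 -` A \<inter> space M | A. A \<in> sets N1} {X2 -` A \<inter> space M | A. A \<in> sets N2}"
    and "indep_set {X2 -` A \<inter> space M | A. A \<in> sets N2} {X3 -` A \<inter> space M | A. A \<in> sets N3}"
proof -
  let ?F = "\<lambda>j::nat. if j = 0 then {X1 -` A \<inter> space M | A. A \<in> sets N1}
    else if j = 1 then {X2 -` A \<inter> space M | A. A \<in> sets N2}
    else {X3 -` A \<inter> space M | A. A \<in> sets N3}"
  have indep: "indep_sets ?F {0, 1, 2}"
    using assms unfolding indep3_def by auto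
  show "indep_set {X1 -` A \<inter> space M | A. A \<in> sets N1} {X2 -` A \<inter> space M | A. A \<in> sets N2}"
    using indep_sets_indep_set[OF indep, of 0 1] by simp
  show "indep_set {X2 -` A \<inter> space M | A. A \<in> sets N2} {X3 -` A \<inter> space M | A. A \<in> sets N3}"
    using indep_sets_indep_set[OF indep, of 1 2] by simp
qed

lemma expectation_uniform_phase:
  assumes [measurable]: "\<phi> \<in> borel_measurable M"
    and unif: "distr M borel \<phi> = uniform_measure lborel {-pi..pi}"
    and [measurable]: "h \<in> borel_measurable borel"
  shows "(\<integral>\<omega>. h (\<phi> \<omega>) \<partial>M) = (LBINT y. indicator {-pi..pi} y * h y) / (2 * pi)"
proof -
  have "(\<integral>\<omega>. h (\<phi> \<omega>) \<partial>M) = integral\<^sup>L (distr M borel \<phi>) h"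
    by (rule integral_distr[symmetric]) measurable
  then show ?thesis
    unfolding unif by (simp add: integral_uniform_Icc)
qed

lemma expectation_uniform_phase_in_front:
  assumes "\<phi> \<in> borel_measurable M" "distr M borel \<phi> = uniform_measure lborel {-pi..pi}"
  shows "(\<integral>\<omega>. indicator {-pi/2..pi/2} (\<phi> \<omega>) \<partial>M) = (1 / 2 :: real)"
proof -
  have "(LBINT y. indicator {-pi..pi} y * indicator {-pi/2..pi/2} y) = (LBINT y. indicator {-pi/2..pi/2} y :: real)"
    by (rule Bochner_Integration.integral_cong) (auto simp: indicator_def)
  also have "\<dots> = pi"
    by simp
  finally have "(LBINT y. indicator {-pi..pi} y * indicator {-pi/2..pi/2} y) = pi" .
  then show ?thesis
    using expectation_uniform_phase[OF assms, of "indicator {-pi/2..pi/2}"] by simp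
qed

lemma expectation_uniform_phase_in_front_sin:
  assumes "\<phi> \<in> borel_measurable M" "distr M borel \<phi> = uniform_measure lborel {-pi..pi}"
  shows "(\<integral>\<omega>. indicator {-pi/2..pi/2} (\<phi> \<omega>) * sin (c + \<phi> \<omega>) \<partial>M) = sin c / pi"
proof -
  have "(LBINT y. indicator {-pi..pi} y * (indicator {-pi/2..pi/2} y * sin (c + y)))
      = (LBINT y. sin (c + y) * indicator {-pi/2..pi/2} y)"
    by (rule Bochner_Integration.integral_cong) (auto simp: indicator_def)
  also have "\<dots> = - cos (c + pi/2) - - cos (c + - pi/2)"
    by (rule integral_FTC_Icc_real) (auto intro!: derivative_eq_intros continuous_intros)
  also have "\<dots> = 2 * sin c"
    by (simp add: cos_add cos_diff)
  finally show ?thesis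
    using expectation_uniform_phase[OF assms, of "\<lambda>y. indicator {-pi/2..pi/2} y * sin (c + y)"]
    by simp
qed

lemma expectation_in_phase_channel:
  fixes a :: "nat \<Rightarrow> 'a \<Rightarrow> real" and \<phi> :: "'a \<Rightarrow> real" and \<nu> :: "real \<Rightarrow> 'a \<Rightarrow> real"
    and G c :: "nat \<Rightarrow> real"
  assumes indep: "indep3 M (PiM K (\<lambda>_. borel)) (\<lambda>\<omega>. \<lambda>k\<in>K. a k \<omega>) borel \<phi>
      (PiM UNIV (\<lambda>_. borel)) (\<lambda>\<omega> t. \<nu> t \<omega>)"
    and a_int: "\<And>k. k \<in> K \<Longrightarrow> integrable M (a k)"
    and a_mean: "\<And>k. k \<in> K \<Longrightarrow> expectation (a k) = C"
    and unif: "distr M borel \<phi> = uniform_measure lborel {-pi..pi}"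
    and \<nu>_int: "integrable M (\<nu> t)" and \<nu>_mean: "expectation (\<nu> t) = 0"
  defines "Z \<equiv> \<lambda>\<omega>. indicator {-pi/2..pi/2} (\<phi> \<omega>) * ((\<Sum>k\<in>K. G k * a k \<omega> * sin (c k + \<phi> \<omega>)) + \<nu> t \<omega>)"
  shows "integrable M Z" and "expectation Z = C / pi * (\<Sum>k\<in>K. G k * sin (c k))"
proof -
  define sel :: "real \<Rightarrow> real" where "sel = indicator {-pi/2..pi/2}"
  define s where "s k y = sel y * sin (c k + y)" for k y
  have [measurable]: "(\<lambda>\<omega>. \<lambda>k\<in>K. a k \<omega>) \<in> measurable M (PiM K (\<lambda>_. borel))"
    "\<phi> \<in> borel_measurable M" "(\<lambda>\<omega> t. \<nu> t \<omega>) \<in> measurable M (PiM UNIV (\<lambda>_. borel))"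
    using indep unfolding indep3_def by auto
  have [measurable]: "sel \<in> borel_measurable borel" "s k \<in> borel_measurable borel" for k
    unfolding s_def sel_def by measurable
  have bounded_integrable: "integrable M (\<lambda>\<omega>. f (\<phi> \<omega>))"
    if [measurable]: "f \<in> borel_measurable borel" and "\<And>y. \<bar>f y\<bar> \<le> 1" for f :: "real \<Rightarrow> real"
    by (rule integrable_const_bound[where B=1]) (use that in auto)
  have sel_int: "integrable M (\<lambda>\<omega>. sel (\<phi> \<omega>))" and s_int: "integrable M (\<lambda>\<omega>. s k (\<phi> \<omega>))" for k
    by (auto intro!: bounded_integrable simp: s_def sel_def indicator_def abs_mult)
  have gain: "integrable M (\<lambda>\<omega>. a k \<omega> * s k (\<phi> \<omega>))"
    "expectation (\<lambda>\<omega>. a k \<omega> * s k (\<phi> \<omega>)) = C * (sin (c k) / pi)" if k: "k \<in> K" for k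
  proof -
    have "indep_var borel (\<lambda>\<omega>. (\<lambda>k\<in>K. a k \<omega>) k) borel (\<lambda>\<omega>. s k (\<phi> \<omega>))"
      using k by (intro indep_var_compose_of_indep_set[OF indep3_indep_set(1)[OF indep]]) auto
    then have ind: "indep_var borel (a k) borel (\<lambda>\<omega>. s k (\<phi> \<omega>))"
      using k by simp
    show "integrable M (\<lambda>\<omega>. a k \<omega> * s k (\<phi> \<omega>))"
      by (rule indep_var_integrable[OF ind a_int[OF k] s_int])
    have "expectation (\<lambda>\<omega>. s k (\<phi> \<omega>)) = sin (c k) / pi"
      unfolding s_def sel_def by (rule expectation_uniform_phase_in_front_sin) (simp_all add: unif)
    then show "expectation (\<lambda>\<omega>. a k \<omega> * s k (\<phi> \<omega>)) = C * (sin (c k) / pi)"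
      using indep_var_lebesgue_integral[OF ind a_int[OF k] s_int] a_mean[OF k] by simp
  qed
  have ind_noise: "indep_var borel (\<lambda>\<omega>. sel (\<phi> \<omega>)) borel (\<lambda>\<omega>. (\<lambda>t. \<nu> t \<omega>) t)"
    by (intro indep_var_compose_of_indep_set[OF indep3_indep_set(2)[OF indep]]) auto
  have noise: "integrable M (\<lambda>\<omega>. sel (\<phi> \<omega>) * \<nu> t \<omega>)" "expectation (\<lambda>\<omega>. sel (\<phi> \<omega>) * \<nu> t \<omega>) = 0"
    using indep_var_integrable[OF ind_noise sel_int \<nu>_int]
      indep_var_lebesgue_integral[OF ind_noise sel_int \<nu>_int] \<nu>_mean by simp_all
  have Z_eq: "Z = (\<lambda>\<omega>. (\<Sum>k\<in>K. G k * (a k \<omega> * s k (\<phi> \<omega>))) + sel (\<phi> \<omega>) * \<nu> t \<omega>)"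
    unfolding Z_def s_def sel_def by (simp add: fun_eq_iff distrib_left sum_distrib_left ac_simps)
  show "integrable M Z"
    unfolding Z_eq using gain noise by (intro Bochner_Integration.integrable_add integrable_sum) auto
  have "expectation Z = (\<Sum>k\<in>K. G k * (C * (sin (c k) / pi)))"
    unfolding Z_eq using gain noise
    by (subst Bochner_Integration.integral_add) (auto intro!: integrable_sum simp: integral_sum)
  then show "expectation Z = C / pi * (\<Sum>k\<in>K. G k * sin (c k))"
    by (simp add: sum_distrib_left ac_simps)
qed

end

theorem lemma3:
  fixes M :: "'a measure"
    and N :: nat and \<theta> :: real
    and w G :: "nat \<Rightarrow> real"
    and F :: "nat \<Rightarrow> real \<Rightarrow> 'a \<Rightarrow> real"
    and \<phi> :: "nat \<Rightarrow> 'a \<Rightarrow> real"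
    and n :: "nat \<Rightarrow> real \<Rightarrow> 'a \<Rightarrow> real"
    and g :: "real \<Rightarrow> real"
    and x :: "nat \<Rightarrow> real \<Rightarrow> 'a \<Rightarrow> real"
    and Xp :: "nat \<Rightarrow> 'a \<Rightarrow> nat set"
    and ghat :: "nat \<Rightarrow> real \<Rightarrow> 'a \<Rightarrow> real"
  assumes P: "prob_space M"
    and N1: "N \<ge> 1"
    and wpos: "\<And>k. k \<in> {1..N} \<Longrightarrow> w k > 0"
    and g_def: "\<And>t. g t = (\<Sum>k=1..N. G k * sin (w k * t + \<theta>))"
    and x_def: "\<And>i t \<omega>. x i t \<omega> =
        (\<Sum>k=1..N. G k * F i (w k) \<omega> * sin (w k * t + \<phi> i \<omega> + \<theta>)) + n i t \<omega>"
    and indep_tuples: "prob_space.indep_vars M (\<lambda>_. tuple_space N)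
        (\<lambda>i \<omega>. ((\<lambda>k\<in>{1..N}. F i (w k) \<omega>), \<phi> i \<omega>, (\<lambda>t. n i t \<omega>))) {1..}"
    and ident_distr: "\<And>i. i \<ge> 1 \<Longrightarrow>
        distr M (tuple_space N) (\<lambda>\<omega>. ((\<lambda>k\<in>{1..N}. F i (w k) \<omega>), \<phi> i \<omega>, (\<lambda>t. n i t \<omega>)))
      = distr M (tuple_space N) (\<lambda>\<omega>. ((\<lambda>k\<in>{1..N}. F 1 (w k) \<omega>), \<phi> 1 \<omega>, (\<lambda>t. n 1 t \<omega>)))"
    and indep_within: "\<And>i. i \<ge> 1 \<Longrightarrow>
        indep3 M (PiM {1..N} (\<lambda>_. borel)) (\<lambda>\<omega>. \<lambda>k\<in>{1..N}. F i (w k) \<omega>)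
                 borel (\<phi> i)
                 (PiM UNIV (\<lambda>_. borel)) (\<lambda>\<omega> t. n i t \<omega>)"
    and F_int: "\<And>i k. i \<ge> 1 \<Longrightarrow> k \<in> {1..N} \<Longrightarrow> integrable M (F i (w k))"
    and \<phi>_unif: "\<And>i. i \<ge> 1 \<Longrightarrow> distr M borel (\<phi> i) = uniform_measure lborel {-pi..pi}"
    and n_int: "\<And>i t. i \<ge> 1 \<Longrightarrow> integrable M (n i t)"
    and n_mean: "\<And>i t. i \<ge> 1 \<Longrightarrow> (\<integral>\<omega>. n i t \<omega> \<partial>M) = 0"
    and Xp_def: "\<And>m \<omega>. Xp m \<omega> = {i \<in> {1..m}. \<bar>\<phi> i \<omega>\<bar> \<le> pi / 2}"
    and ghat_def: "\<And>m t \<omega>. ghat m t \<omega> = (1 / real (card (Xp m \<omega>))) * (\<Sum>i\<in>Xp m \<omega>. x i t \<omega>)"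
    and same_mean: "\<exists>C. \<forall>i k. i \<ge> 1 \<longrightarrow> k \<in> {1..N} \<longrightarrow> (\<integral>\<omega>. F i (w k) \<omega> \<partial>M) = C"
  shows "\<exists>c. \<forall>t. AE \<omega> in M. (\<lambda>m. ghat m t \<omega>) \<longlonglongrightarrow> c * g t"
proof -
  interpret prob_space M by (rule P)
  obtain C where C: "\<And>i k. i \<ge> 1 \<Longrightarrow> k \<in> {1..N} \<Longrightarrow> (\<integral>\<omega>. F i (w k) \<omega> \<partial>M) = C"
    using same_mean by auto
  define T where "T i \<omega> = ((\<lambda>k\<in>{1..N}. F i (w k) \<omega>), \<phi> i \<omega>, (\<lambda>t. n i t \<omega>))" for i \<omega>
  define sel where "sel p = (indicator {-pi/2..pi/2} (fst (snd p)) :: real)"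
    for p :: "(nat \<Rightarrow> real) \<times> real \<times> (real \<Rightarrow> real)"
  define out where "out t p = sel p * ((\<Sum>k=1..N. G k * fst p k * sin (w k * t + fst (snd p) + \<theta>)) + snd (snd p) t)"
    for t p
  have [measurable]: "sel \<in> borel_measurable (tuple_space N)" "out t \<in> borel_measurable (tuple_space N)" for t
    unfolding sel_def out_def tuple_space_def by measurable
  have sel_T: "sel (T i \<omega>) = indicator {-pi/2..pi/2} (\<phi> i \<omega>)"
    and out_T: "out t (T i \<omega>) = indicator {-pi/2..pi/2} (\<phi> i \<omega>) * x i t \<omega>" for i t \<omega>
    unfolding sel_def out_def T_def x_def by (auto intro!: sum.cong)
  have \<phi>1[measurable]: "\<phi> 1 \<in> borel_measurable M"
    using indep_within[of 1] unfolding indep3_def by simp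
  have channel: "integrable M (\<lambda>\<omega>. out t (T 1 \<omega>))" "(\<integral>\<omega>. out t (T 1 \<omega>) \<partial>M) = C / pi * g t" for t
    using expectation_in_phase_channel[OF indep_within[of 1], where C=C and t=t
        and G=G and c=\<open>\<lambda>k. w k * t + \<theta>\<close>] F_int C \<phi>_unif n_int n_mean
    by (simp_all add: out_T x_def g_def ac_simps)
  have selection: "integrable M (\<lambda>\<omega>. sel (T 1 \<omega>))" "(\<integral>\<omega>. sel (T 1 \<omega>) \<partial>M) = 1 / 2"
    unfolding sel_T
    by (rule integrable_const_bound[where B=1]; (measurable | simp))
      (rule expectation_uniform_phase_in_front[OF \<phi>1 \<phi>_unif], simp)
  have sum_Xp: "(\<Sum>i\<in>Xp m \<omega>. f i) = (\<Sum>i=1..m. indicator {-pi/2..pi/2} (\<phi> i \<omega>) * f i)"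
    for m \<omega> and f :: "nat \<Rightarrow> real"
    unfolding Xp_def sum.inter_filter[OF finite_atLeastAtMost]
    by (rule sum.cong) (auto simp: indicator_def abs_le_iff)
  have ghat_eq: "ghat m t \<omega> = (\<Sum>i=1..m. out t (T i \<omega>)) / (\<Sum>i=1..m. sel (T i \<omega>))" for m t \<omega>
    using sum_Xp[of "\<lambda>i. x i t \<omega>"] sum_Xp[of "\<lambda>_. 1"]
    by (simp add: ghat_def out_T sel_T)
  have T_indep: "indep_vars (\<lambda>_. tuple_space N) T {1..}"
    using indep_tuples unfolding T_def[abs_def] .
  have T_ident: "distr M (tuple_space N) (T i) = distr M (tuple_space N) (T 1)" if "1 \<le> i" for i
    using ident_distr[OF that] unfolding T_def[abs_def] .
  show ?thesis
  proof (intro exI allI)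
    fix t
    have "(\<integral>\<omega>. sel (T 1 \<omega>) \<partial>M) \<noteq> 0"
      using selection(2) by simp
    then have "AE \<omega> in M. (\<lambda>m. (\<Sum>i=1..m. out t (T i \<omega>)) / (\<Sum>i=1..m. sel (T i \<omega>)))
        \<longlonglongrightarrow> (\<integral>\<omega>. out t (T 1 \<omega>) \<partial>M) / (\<integral>\<omega>. sel (T 1 \<omega>) \<partial>M)"
      by (intro ratio_of_iid_averages_tendsto[OF T_indep _ _ channel(1) _ selection(1)] T_ident) simp_all
    then have "AE \<omega> in M. (\<lambda>m. ghat m t \<omega>) \<longlonglongrightarrow> (C / pi * g t) / (1 / 2)"
      by (simp only: ghat_eq channel(2) selection(2))
    then show "AE \<omega> in M. (\<lambda>m. ghat m t \<omega>) \<longlonglongrightarrow> (2 * C / pi) * g t"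
      by (simp add: mult_ac)
  qed
qed

end
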